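(* Any finite union of rational convex polyhedra of positive codimension in $\mathbb{R}^n$ (in particular, the union of all cells of any rational polyhedral complex all of whose cells have positive codimension) coincides with a tropical prevariety in $\mathbb{R}^n$.
   Context: A rational convex polyhedron is a set defined by finitely many linear equations and non-strict linear inequalities with integer coefficients. A tropical polynomial $f$ in $n$ variables is a function $f(x)=\min\{L_1(x),\dots,L_m(x)\}$ on $\mathbb{R}^n$, where each $L_j(x)=\sum_{i=1}^n a_{ji}x_i+b_j$ has non-negative integer coefficients $a_{ji}$ and real constant term $b_j$. The tropical hypersurface $V(f)$ is the set of points where this piecewise-linear function is not smooth. A tropical prevariety is a set of the form $V(f_1)\cap\cdots\cap V(f_k)$ for finitely many tropical polynomials. *)

theory Defs
  imports "HOL-Analysis.Analysis"
begin

definition rational_polyhedron :: "(real ^ 'n) set \<Rightarrow> bool" where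
  "rational_polyhedron P \<longleftrightarrow>
     (\<exists>E I :: ((int ^ 'n) \<times> int) set. finite E \<and> finite I \<and>
        P = {x. (\<forall>(a, b) \<in> E. (\<Sum>i\<in>UNIV. of_int (a $ i) * x $ i) = of_int b) \<and>
                (\<forall>(a, b) \<in> I. (\<Sum>i\<in>UNIV. of_int (a $ i) * x $ i) \<le> of_int b)})"

text \<open>A tropical polynomial is given by a finite nonempty set of terms (a, b), with
exponent vector a of non-negative integers and real constant b; it denotes
x \<mapsto> min over terms of (a \<bullet> x + b).\<close>
definition tropical_polynomial :: "((nat ^ 'n) \<times> real) set \<Rightarrow> bool" where
  "tropical_polynomial T \<longleftrightarrow> finite T \<and> T \<noteq> {}"

definition trop_eval :: "((nat ^ 'n) \<times> real) set \<Rightarrow> real ^ 'n \<Rightarrow> real" where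
  "trop_eval T x = Min ((\<lambda>(a, b). (\<Sum>i\<in>UNIV. real (a $ i) * x $ i) + b) ` T)"

definition trop_hypersurface :: "((nat ^ 'n) \<times> real) set \<Rightarrow> (real ^ 'n) set" where
  "trop_hypersurface T = {x. \<not> (trop_eval T differentiable (at x))}"

definition tropical_prevariety :: "(real ^ 'n) set \<Rightarrow> bool" where
  "tropical_prevariety S \<longleftrightarrow>
     (\<exists>F :: ((nat ^ 'n) \<times> real) set set. finite F \<and> (\<forall>T\<in>F. tropical_polynomial T) \<and>
        S = (\<Inter>T\<in>F. trop_hypersurface T))"

end

(*
  A tropical polynomial is non-smooth exactly where its minimum is attained by two terms with
  different exponents. Hence V(f g) = V(f) \<union> V(g) for the tropical product, so tropical
  prevarieties are closed under finite unions and it suffices to treat one polyhedron P.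
  If P has positive codimension, one of its defining inequalities c x \<le> d (c \<noteq> 0) is tight on
  all of P, since otherwise P would contain a point with all nonzero inequalities strict and hence
  an open set. The binomial min(c\<^sup>+ x, c\<^sup>- x + d) cuts out the hyperplane c x = d, and on that
  hyperplane each remaining inequality a x \<le> b is cut out by the trinomial
  min((c\<^sup>+ + a\<^sup>+) x, (c\<^sup>- + a\<^sup>+) x + d, (c\<^sup>+ + a\<^sup>-) x + b).
*)
theory Submission
  imports Defs
begin

definition exponent_vec :: "nat ^ 'n \<Rightarrow> real ^ 'n" where
  "exponent_vec a = (\<chi> i. real (a $ i))"

definition term_eval :: "(nat ^ 'n) \<times> real \<Rightarrow> real ^ 'n \<Rightarrow> real" where
  "term_eval t x = exponent_vec (fst t) \<bullet> x + snd t"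

definition min_exponents :: "((nat ^ 'n) \<times> real) set \<Rightarrow> real ^ 'n \<Rightarrow> (nat ^ 'n) set" where
  "min_exponents T x = {fst t |t. t \<in> T \<and> term_eval t x = trop_eval T x}"

lemma exponent_vec_inject [simp]: "exponent_vec a = exponent_vec b \<longleftrightarrow> a = b"
  by (simp add: exponent_vec_def vec_eq_iff)

lemma exponent_vec_add: "exponent_vec (a + b) = exponent_vec a + exponent_vec b"
  by (simp add: exponent_vec_def vec_eq_iff)

lemma term_eval_add: "term_eval (s + t) x = term_eval s x + term_eval t x"
  by (simp add: term_eval_def exponent_vec_add inner_add_left)

lemma has_derivative_term_eval:
  "(term_eval t has_derivative (\<lambda>v. exponent_vec (fst t) \<bullet> v)) F"
  unfolding term_eval_def by (auto intro!: derivative_eq_intros)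

lemma trop_eval_eq_Min: "trop_eval T x = Min ((\<lambda>t. term_eval t x) ` T)"
  unfolding trop_eval_def term_eval_def exponent_vec_def
  by (rule arg_cong[where f = Min])
     (auto simp: inner_vec_def mult.commute split: prod.splits intro!: image_cong)

lemma trop_eval_le_term_eval: "finite T \<Longrightarrow> t \<in> T \<Longrightarrow> trop_eval T x \<le> term_eval t x"
  unfolding trop_eval_eq_Min by simp

lemma trop_eval_attained:
  assumes "tropical_polynomial T"
  obtains t where "t \<in> T" "term_eval t x = trop_eval T x"
proof -
  have "Min ((\<lambda>t. term_eval t x) ` T) \<in> (\<lambda>t. term_eval t x) ` T"
    using assms by (intro Min_in) (auto simp: tropical_polynomial_def)
  then show ?thesis using that unfolding trop_eval_eq_Min by force
qed

lemma mem_min_exponents: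
  "a \<in> min_exponents T x \<longleftrightarrow> (\<exists>t\<in>T. fst t = a \<and> term_eval t x = trop_eval T x)"
  unfolding min_exponents_def by blast

lemma min_exponents_nonempty: "tropical_polynomial T \<Longrightarrow> min_exponents T x \<noteq> {}"
  by (rule trop_eval_attained[of T x]) (auto simp: min_exponents_def)

text \<open>A term attaining the minimum touches the tropical polynomial from above, so its linear part
  is the only candidate for the derivative.\<close>
lemma derivative_of_trop_eval:
  assumes "finite T" "(trop_eval T has_derivative D) (at x)"
    and "t \<in> T" "term_eval t x = trop_eval T x"
  shows "D = (\<lambda>v. exponent_vec (fst t) \<bullet> v)"
proof -
  have "((\<lambda>y. trop_eval T y - term_eval t y) has_derivative
          (\<lambda>v. D v - exponent_vec (fst t) \<bullet> v)) (at x)"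
    by (intro has_derivative_diff assms(2) has_derivative_term_eval)
  moreover have "\<forall>y\<in>UNIV. trop_eval T y - term_eval t y \<le> trop_eval T x - term_eval t x"
    using trop_eval_le_term_eval[OF assms(1,3)] assms(4) by auto
  ultimately have "(\<lambda>v. D v - exponent_vec (fst t) \<bullet> v) = (\<lambda>v. 0)"
    by (intro differential_zero_maxmin[of x UNIV]) auto
  then show ?thesis by (metis eq_iff_diff_eq_0)
qed

lemma trop_eval_eventually_eq_term:
  assumes "finite T" "t \<in> T" and min: "\<And>s. s \<in> T \<Longrightarrow> s \<noteq> t \<Longrightarrow> term_eval t x < term_eval s x"
  shows "\<forall>\<^sub>F y in nhds x. trop_eval T y = term_eval t y"
proof -
  have "\<forall>\<^sub>F y in nhds x. term_eval t y < term_eval s y" if "s \<in> T" "s \<noteq> t" for s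
  proof -
    have "((\<lambda>y. term_eval s y - term_eval t y) \<longlongrightarrow> term_eval s x - term_eval t x) (nhds x)"
      unfolding term_eval_def by (intro tendsto_intros filterlim_ident)
    then have "\<forall>\<^sub>F y in nhds x. 0 < term_eval s y - term_eval t y"
      using min[OF that] by (intro order_tendstoD(1)) auto
    then show ?thesis by eventually_elim auto
  qed
  then have "\<forall>\<^sub>F y in nhds x. \<forall>s\<in>T - {t}. term_eval t y < term_eval s y"
    using assms(1) by (simp add: eventually_ball_finite)
  then show ?thesis
  proof eventually_elim
    case (elim y)
    show ?case
      unfolding trop_eval_eq_Min
    proof (rule Min_eqI)
      fix r assume "r \<in> (\<lambda>s. term_eval s y) ` T"
      then obtain s where "s \<in> T" "r = term_eval s y" by blast
      then show "term_eval t y \<le> r" using elim by (cases "s = t") (force intro: less_imp_le)+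
    qed (use assms(1,2) in auto)
  qed
qed

lemma not_mem_trop_hypersurfaceI:
  assumes "finite T" "t \<in> T" "\<And>s. s \<in> T \<Longrightarrow> s \<noteq> t \<Longrightarrow> term_eval t x < term_eval s x"
  shows "x \<notin> trop_hypersurface T"
proof -
  obtain S where "open S" "x \<in> S" "\<And>y. y \<in> S \<Longrightarrow> trop_eval T y = term_eval t y"
    using trop_eval_eventually_eq_term[OF assms] unfolding eventually_nhds by blast
  then have "(trop_eval T has_derivative (\<lambda>v. exponent_vec (fst t) \<bullet> v)) (at x)"
    by (intro has_derivative_transform_within_open[OF has_derivative_term_eval]) auto
  then show ?thesis by (auto simp: trop_hypersurface_def differentiable_def)
qed

lemma trop_hypersurface_iff:
  assumes T: "tropical_polynomial T"
  shows "x \<in> trop_hypersurface T \<longleftrightarrow> \<not> is_singleton (min_exponents T x)"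
proof (intro iffI notI)
  from T have fin: "finite T" by (simp add: tropical_polynomial_def)
  assume "x \<in> trop_hypersurface T" and "is_singleton (min_exponents T x)"
  then obtain a where a: "min_exponents T x = {a}" by (auto elim: is_singletonE)
  then obtain t where t: "t \<in> T" "term_eval t x = trop_eval T x" "fst t = a"
    using mem_min_exponents[of a T x] by auto
  have "term_eval t x < term_eval s x" if "s \<in> T" "s \<noteq> t" for s
  proof (rule ccontr)
    assume "\<not> ?thesis"
    then have "term_eval s x = trop_eval T x"
      using t trop_eval_le_term_eval[OF fin that(1), of x] by auto
    then have "fst s = a" using a that(1) mem_min_exponents[of "fst s" T x] by auto
    then have "s = t" using \<open>term_eval s x = trop_eval T x\<close> t by (auto simp: term_eval_def prod_eq_iff)
    then show False using that(2) by simp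
  qed
  then show False
    using not_mem_trop_hypersurfaceI[OF fin t(1)] \<open>x \<in> trop_hypersurface T\<close> by blast
next
  assume "\<not> is_singleton (min_exponents T x)"
  then obtain a a' where "a \<in> min_exponents T x" "a' \<in> min_exponents T x" "a \<noteq> a'"
    using min_exponents_nonempty[OF T] is_singletonI'[of "min_exponents T x"] by auto
  then obtain s t where st: "s \<in> T" "t \<in> T" "term_eval s x = trop_eval T x"
      "term_eval t x = trop_eval T x" "fst s \<noteq> fst t"
    unfolding min_exponents_def by auto
  show "x \<in> trop_hypersurface T"
  proof (rule ccontr)
    assume "x \<notin> trop_hypersurface T"
    then obtain D where D: "(trop_eval T has_derivative D) (at x)"
      by (auto simp: trop_hypersurface_def differentiable_def)
    from T have fin: "finite T" by (simp add: tropical_polynomial_def)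
    have "(\<lambda>v. exponent_vec (fst s) \<bullet> v) = (\<lambda>v. exponent_vec (fst t) \<bullet> v)"
      using derivative_of_trop_eval[OF fin D st(1,3)] derivative_of_trop_eval[OF fin D st(2,4)]
      by simp
    then have "exponent_vec (fst s) = exponent_vec (fst t)" by (metis vector_eq_rdot)
    then show False using st(5) by simp
  qed
qed

lemma mem_trop_hypersurfaceI:
  assumes "tropical_polynomial T" "s \<in> T" "t \<in> T" "fst s \<noteq> fst t"
    and "term_eval s x = term_eval t x" "\<And>u. u \<in> T \<Longrightarrow> term_eval s x \<le> term_eval u x"
  shows "x \<in> trop_hypersurface T"
proof -
  have "trop_eval T x = term_eval s x"
    unfolding trop_eval_eq_Min using assms(1,2,6) by (intro Min_eqI) (auto simp: tropical_polynomial_def)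
  then have "fst s \<in> min_exponents T x" "fst t \<in> min_exponents T x"
    using assms(2,3,5) by (auto simp: mem_min_exponents)
  then show ?thesis using assms(4) by (auto simp: trop_hypersurface_iff[OF assms(1)] is_singleton_def)
qed

definition trop_mult :: "((nat ^ 'n) \<times> real) set \<Rightarrow> ((nat ^ 'n) \<times> real) set \<Rightarrow> ((nat ^ 'n) \<times> real) set"
  where "trop_mult f g = (\<lambda>(s, t). s + t) ` (f \<times> g)"

lemma mem_trop_mult: "u \<in> trop_mult f g \<longleftrightarrow> (\<exists>s\<in>f. \<exists>t\<in>g. u = s + t)"
  unfolding trop_mult_def by force

lemma tropical_polynomial_trop_mult:
  "tropical_polynomial f \<Longrightarrow> tropical_polynomial g \<Longrightarrow> tropical_polynomial (trop_mult f g)"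
  by (auto simp: tropical_polynomial_def trop_mult_def)

lemma trop_eval_trop_mult:
  assumes f: "tropical_polynomial f" and g: "tropical_polynomial g"
  shows "trop_eval (trop_mult f g) x = trop_eval f x + trop_eval g x"
proof -
  have fin: "finite f" "finite g" using f g by (auto simp: tropical_polynomial_def)
  obtain s0 where s0: "s0 \<in> f" "term_eval s0 x = trop_eval f x" using trop_eval_attained[OF f] .
  obtain t0 where t0: "t0 \<in> g" "term_eval t0 x = trop_eval g x" using trop_eval_attained[OF g] .
  show ?thesis unfolding trop_eval_eq_Min[of "trop_mult f g"]
  proof (rule Min_eqI)
    show "finite ((\<lambda>t. term_eval t x) ` trop_mult f g)" using fin by (simp add: trop_mult_def)
  next
    fix r assume "r \<in> (\<lambda>t. term_eval t x) ` trop_mult f g"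
    then obtain s t where "s \<in> f" "t \<in> g" "r = term_eval (s + t) x"
      by (auto simp: mem_trop_mult)
    then show "trop_eval f x + trop_eval g x \<le> r"
      using trop_eval_le_term_eval[OF fin(1)] trop_eval_le_term_eval[OF fin(2)]
      by (simp add: term_eval_add add_mono)
  next
    have "s0 + t0 \<in> trop_mult f g" using s0 t0 by (auto simp: mem_trop_mult)
    then show "trop_eval f x + trop_eval g x \<in> (\<lambda>t. term_eval t x) ` trop_mult f g"
      using s0 t0 by (force simp: term_eval_add)
  qed
qed

text \<open>A sum of two terms attains the minimum of the product exactly when both summands attain
  the minima of their factors.\<close>
lemma min_exponents_trop_mult:
  assumes f: "tropical_polynomial f" and g: "tropical_polynomial g"
  shows "min_exponents (trop_mult f g) x = (\<lambda>(a, b). a + b) ` (min_exponents f x \<times> min_exponents g x)"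
proof -
  have fin: "finite f" "finite g" using f g by (auto simp: tropical_polynomial_def)
  have attains_iff: "term_eval (s + t) x = trop_eval (trop_mult f g) x \<longleftrightarrow>
      term_eval s x = trop_eval f x \<and> term_eval t x = trop_eval g x" if "s \<in> f" "t \<in> g" for s t
    using trop_eval_le_term_eval[OF fin(1) that(1), of x] trop_eval_le_term_eval[OF fin(2) that(2), of x]
    by (auto simp: trop_eval_trop_mult[OF f g] term_eval_add)
  show ?thesis
  proof (intro set_eqI iffI)
    fix a assume "a \<in> min_exponents (trop_mult f g) x"
    then obtain u where "u \<in> trop_mult f g" "fst u = a" "term_eval u x = trop_eval (trop_mult f g) x"
      unfolding mem_min_exponents by blast
    then obtain s t where st: "s \<in> f" "t \<in> g" "a = fst s + fst t"
        "term_eval (s + t) x = trop_eval (trop_mult f g) x"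
      unfolding mem_trop_mult by auto
    then have "fst s \<in> min_exponents f x" "fst t \<in> min_exponents g x"
      using attains_iff[OF st(1,2)] by (auto simp: mem_min_exponents)
    then show "a \<in> (\<lambda>(a, b). a + b) ` (min_exponents f x \<times> min_exponents g x)"
      using st(3) by (intro image_eqI[where x = "(fst s, fst t)"]) auto
  next
    fix a assume "a \<in> (\<lambda>(a, b). a + b) ` (min_exponents f x \<times> min_exponents g x)"
    then obtain b c where "a = b + c" "b \<in> min_exponents f x" "c \<in> min_exponents g x" by auto
    then obtain s t where st: "s \<in> f" "t \<in> g" "a = fst (s + t)"
        "term_eval s x = trop_eval f x" "term_eval t x = trop_eval g x"
      unfolding mem_min_exponents by auto
    moreover have "s + t \<in> trop_mult f g" using st by (auto simp: mem_trop_mult)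
    ultimately show "a \<in> min_exponents (trop_mult f g) x"
      unfolding mem_min_exponents using attains_iff by blast
  qed
qed

lemma is_singleton_sums:
  fixes A B :: "'a::cancel_ab_semigroup_add set"
  assumes "A \<noteq> {}" "B \<noteq> {}"
  shows "is_singleton ((\<lambda>(a, b). a + b) ` (A \<times> B)) \<longleftrightarrow> is_singleton A \<and> is_singleton B"
proof
  assume sums: "is_singleton ((\<lambda>(a, b). a + b) ` (A \<times> B))"
  have "a = a'" if "a \<in> A" "a' \<in> A" for a a'
  proof -
    obtain b where "b \<in> B" using assms(2) by blast
    then have "a + b \<in> (\<lambda>(a, b). a + b) ` (A \<times> B)" "a' + b \<in> (\<lambda>(a, b). a + b) ` (A \<times> B)"
      using that by force+
    then have "a + b = a' + b" using sums by (metis is_singleton_def singletonD)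
    then show ?thesis by simp
  qed
  moreover have "b = b'" if "b \<in> B" "b' \<in> B" for b b'
  proof -
    obtain a where "a \<in> A" using assms(1) by blast
    then have "a + b \<in> (\<lambda>(a, b). a + b) ` (A \<times> B)" "a + b' \<in> (\<lambda>(a, b). a + b) ` (A \<times> B)"
      using that by force+
    then have "a + b = a + b'" using sums by (metis is_singleton_def singletonD)
    then show ?thesis by simp
  qed
  ultimately show "is_singleton A \<and> is_singleton B" using assms by (simp add: is_singletonI')
qed (auto simp: is_singleton_def)

lemma trop_hypersurface_trop_mult:
  assumes "tropical_polynomial f" "tropical_polynomial g"
  shows "trop_hypersurface (trop_mult f g) = trop_hypersurface f \<union> trop_hypersurface g"
  using assms
  by (auto simp: trop_hypersurface_iff tropical_polynomial_trop_mult min_exponents_trop_mult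
      is_singleton_sums min_exponents_nonempty)

lemma tropical_prevariety_empty: "tropical_prevariety ({} :: (real ^ 'n) set)"
proof -
  let ?T = "{(0, 0)} :: ((nat ^ 'n) \<times> real) set"
  have T: "tropical_polynomial ?T" by (simp add: tropical_polynomial_def)
  have "min_exponents ?T x = {0}" for x
    by (auto simp: min_exponents_def trop_eval_eq_Min)
  then have "trop_hypersurface ?T = {}" by (auto simp: trop_hypersurface_iff[OF T])
  then show ?thesis unfolding tropical_prevariety_def using T by (intro exI[of _ "{?T}"]) auto
qed

lemma tropical_prevariety_Un:
  assumes "tropical_prevariety A" "tropical_prevariety B"
  shows "tropical_prevariety (A \<union> B)"
proof -
  obtain FA where FA: "finite FA" "\<forall>T\<in>FA. tropical_polynomial T" "A = (\<Inter>T\<in>FA. trop_hypersurface T)"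
    using assms(1) by (auto simp: tropical_prevariety_def)
  obtain FB where FB: "finite FB" "\<forall>T\<in>FB. tropical_polynomial T" "B = (\<Inter>T\<in>FB. trop_hypersurface T)"
    using assms(2) by (auto simp: tropical_prevariety_def)
  let ?F = "(\<lambda>(f, g). trop_mult f g) ` (FA \<times> FB)"
  have "(\<Inter>T\<in>?F. trop_hypersurface T) = (\<Inter>(f, g)\<in>FA \<times> FB. trop_hypersurface f \<union> trop_hypersurface g)"
    using FA(2) FB(2) by (auto simp: trop_hypersurface_trop_mult)
  also have "\<dots> = A \<union> B" unfolding FA(3) FB(3) by auto
  finally show ?thesis unfolding tropical_prevariety_def
    using FA FB by (intro exI[of _ ?F]) (auto intro: tropical_polynomial_trop_mult)
qed

lemma tropical_prevariety_Union:
  "finite \<A> \<Longrightarrow> (\<And>A. A \<in> \<A> \<Longrightarrow> tropical_prevariety A) \<Longrightarrow> tropical_prevariety (\<Union>\<A>)"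
  by (induction \<A> rule: finite_induct) (auto intro: tropical_prevariety_empty tropical_prevariety_Un)

definition int_vec :: "int ^ 'n \<Rightarrow> real ^ 'n" where
  "int_vec c = (\<chi> i. of_int (c $ i))"

lemma int_vec_eq_0_iff [simp]: "int_vec c = 0 \<longleftrightarrow> c = 0"
  by (simp add: int_vec_def vec_eq_iff)

lemma int_vec_uminus: "int_vec (- c) = - int_vec c"
  by (simp add: int_vec_def vec_eq_iff)

lemma rational_polyhedron_inequalities:
  assumes "rational_polyhedron P"
  obtains R where "finite R" "P = {x. \<forall>(a, b)\<in>R. int_vec a \<bullet> x \<le> of_int b}"
proof -
  obtain E I :: "((int ^ 'a) \<times> int) set" where EI: "finite E" "finite I"
    "P = {x. (\<forall>(a, b) \<in> E. (\<Sum>i\<in>UNIV. of_int (a $ i) * x $ i) = of_int b) \<and>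
             (\<forall>(a, b) \<in> I. (\<Sum>i\<in>UNIV. of_int (a $ i) * x $ i) \<le> of_int b)}"
    using assms unfolding rational_polyhedron_def by blast
  have sum_eq: "(\<Sum>i\<in>UNIV. of_int (a $ i) * x $ i) = int_vec a \<bullet> x" for a and x :: "real ^ 'a"
    by (simp add: int_vec_def inner_vec_def)
  let ?E = "E \<union> (\<lambda>(a, b). (- a, - b)) ` E"
  have "(\<forall>(a, b)\<in>E. int_vec a \<bullet> x = of_int b) \<longleftrightarrow> (\<forall>(a, b)\<in>?E. int_vec a \<bullet> x \<le> of_int b)"
    for x :: "real ^ 'a"
  proof
    assume "\<forall>(a, b)\<in>E. int_vec a \<bullet> x = of_int b"
    then show "\<forall>(a, b)\<in>?E. int_vec a \<bullet> x \<le> of_int b" by (auto simp: int_vec_uminus)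
  next
    assume le: "\<forall>(a, b)\<in>?E. int_vec a \<bullet> x \<le> of_int b"
    show "\<forall>(a, b)\<in>E. int_vec a \<bullet> x = of_int b"
    proof (intro ballI)
      fix r assume "r \<in> E"
      then have "r \<in> ?E" "(- fst r, - snd r) \<in> ?E"
        by (auto intro!: image_eqI[of _ _ r] simp: case_prod_beta)
      from le this(1) have "case r of (a, b) \<Rightarrow> int_vec a \<bullet> x \<le> of_int b" by (rule bspec)
      moreover from le \<open>(- fst r, - snd r) \<in> ?E\<close>
      have "case (- fst r, - snd r) of (a, b) \<Rightarrow> int_vec a \<bullet> x \<le> of_int b" by (rule bspec)
      ultimately show "case r of (a, b) \<Rightarrow> int_vec a \<bullet> x = of_int b"
        by (simp add: int_vec_uminus case_prod_beta)
    qed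
  qed
  then have "P = {x. \<forall>(a, b)\<in>I \<union> ?E. int_vec a \<bullet> x \<le> of_int b}"
    unfolding EI(3) sum_eq ball_Un by blast
  moreover have "finite (I \<union> ?E)" using EI by simp
  ultimately show ?thesis by (intro that)
qed

lemma convex_common_strict_point:
  fixes J :: "('a::real_inner \<times> real) set"
  assumes "finite J" "convex P" "P \<noteq> {}"
    and "\<And>a b. (a, b) \<in> J \<Longrightarrow> \<forall>x\<in>P. a \<bullet> x \<le> b"
    and "\<And>a b. (a, b) \<in> J \<Longrightarrow> \<exists>x\<in>P. a \<bullet> x < b"
  shows "\<exists>z\<in>P. \<forall>(a, b)\<in>J. a \<bullet> z < b"
  using assms
proof (induction J rule: finite_induct)
  case empty
  then show ?case by auto
next
  case (insert r J)
  obtain a b where r: "r = (a, b)" by fastforce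
  obtain z where z: "z \<in> P" "\<forall>(a, b)\<in>J. a \<bullet> z < b" using insert by auto
  obtain y where y: "y \<in> P" "a \<bullet> y < b" using insert.prems(4)[of a b] r by auto
  define m where "m = (1/2) *\<^sub>R z + (1/2) *\<^sub>R y"
  have "m \<in> P" using \<open>convex P\<close> z(1) y(1) unfolding m_def convex_def by simp
  moreover have "a' \<bullet> m < b'" if "(a', b') \<in> insert r J" for a' b'
  proof -
    have "a' \<bullet> z \<le> b'" "a' \<bullet> y \<le> b'" using insert.prems(3) that z(1) y(1) by auto
    moreover have "a' \<bullet> z < b' \<or> a' \<bullet> y < b'" using that r z(2) y(2) by auto
    ultimately show ?thesis by (auto simp: m_def inner_add_right)
  qed
  ultimately show ?case by blast
qed

lemma implicit_equality_if_aff_dim_lt: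
  fixes R :: "('a::euclidean_space \<times> real) set"
  assumes R: "finite R" and P: "P = {x. \<forall>(a, b)\<in>R. a \<bullet> x \<le> b}"
    and "P \<noteq> {}" and "aff_dim P < DIM('a)"
  obtains a b where "(a, b) \<in> R" "a \<noteq> 0" "\<forall>x\<in>P. a \<bullet> x = b"
proof -
  let ?J = "{(a, b) \<in> R. a \<noteq> 0}"
  have le: "\<forall>x\<in>P. a \<bullet> x \<le> b" if "(a, b) \<in> R" for a b using that P by auto
  have "P = (\<Inter>r\<in>R. {x. fst r \<bullet> x \<le> snd r})" using P by (auto simp: case_prod_beta)
  then have "convex P" by (auto intro!: convex_INT convex_halfspace_le)
  have "(\<And>a b. (a, b) \<in> R \<Longrightarrow> a \<noteq> 0 \<Longrightarrow> \<exists>x\<in>P. a \<bullet> x < b) \<Longrightarrow> False"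
  proof -
    assume strict: "\<And>a b. (a, b) \<in> R \<Longrightarrow> a \<noteq> 0 \<Longrightarrow> \<exists>x\<in>P. a \<bullet> x < b"
    have "finite ?J" by (rule rev_finite_subset[OF R]) auto
    then obtain z where "z \<in> P" "\<forall>(a, b)\<in>?J. a \<bullet> z < b"
      using convex_common_strict_point[of ?J P] le strict \<open>convex P\<close> \<open>P \<noteq> {}\<close> by auto
    define S where "S = (\<Inter>(a, b)\<in>?J. {x. a \<bullet> x < b})"
    have "open S" unfolding S_def using \<open>finite ?J\<close> by (auto intro!: open_halfspace_lt)
    moreover have "z \<in> S" using \<open>\<forall>(a, b)\<in>?J. a \<bullet> z < b\<close> by (auto simp: S_def)
    moreover have "S \<subseteq> P"
      using \<open>z \<in> P\<close> unfolding S_def P by (fastforce simp: less_imp_le)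
    ultimately have "aff_dim P \<ge> DIM('a)"
      using aff_dim_open[of S] aff_dim_subset[of S P] by fastforce
    then show False using \<open>aff_dim P < DIM('a)\<close> by simp
  qed
  then show ?thesis using that le by (metis order_less_le)
qed

definition pos_part_vec :: "int ^ 'n \<Rightarrow> nat ^ 'n" where
  "pos_part_vec c = (\<chi> i. nat (c $ i))"

definition neg_part_vec :: "int ^ 'n \<Rightarrow> nat ^ 'n" where
  "neg_part_vec c = (\<chi> i. nat (- c $ i))"

lemma exponent_vec_pos_minus_neg:
  "exponent_vec (pos_part_vec c) - exponent_vec (neg_part_vec c) = int_vec c"
proof -
  have "real (nat k) - real (nat (- k)) = real_of_int k" for k :: int by (cases "k \<ge> 0") auto
  then show ?thesis by (simp add: exponent_vec_def pos_part_vec_def neg_part_vec_def int_vec_def vec_eq_iff)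
qed

lemma pos_part_vec_neq_neg_part_vec: "c \<noteq> 0 \<Longrightarrow> pos_part_vec c \<noteq> neg_part_vec c"
  by (metis exponent_vec_pos_minus_neg int_vec_eq_0_iff right_minus_eq)

lemma inner_int_vec: "int_vec c \<bullet> x = exponent_vec (pos_part_vec c) \<bullet> x - exponent_vec (neg_part_vec c) \<bullet> x"
  by (simp flip: exponent_vec_pos_minus_neg add: inner_diff_left)

definition hyperplane_poly :: "int ^ 'n \<Rightarrow> int \<Rightarrow> ((nat ^ 'n) \<times> real) set" where
  "hyperplane_poly c d = {(pos_part_vec c, 0), (neg_part_vec c, of_int d)}"

text \<open>On the hyperplane c x = d the first two terms tie with distinct exponents, so the hypersurface
  there is the set where the third term does not beat them.\<close>
definition halfspace_poly :: "int ^ 'n \<Rightarrow> int \<Rightarrow> int ^ 'n \<Rightarrow> int \<Rightarrow> ((nat ^ 'n) \<times> real) set" where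
  "halfspace_poly c d a b =
    {(pos_part_vec c + pos_part_vec a, 0), (neg_part_vec c + pos_part_vec a, of_int d),
     (pos_part_vec c + neg_part_vec a, of_int b)}"

lemma trop_hypersurface_hyperplane_poly:
  assumes "c \<noteq> 0"
  shows "trop_hypersurface (hyperplane_poly c d) = {x. int_vec c \<bullet> x = of_int d}"
proof (rule set_eqI)
  fix x
  let ?s = "(pos_part_vec c, 0 :: real)" and ?t = "(neg_part_vec c, real_of_int d)"
  have T: "tropical_polynomial (hyperplane_poly c d)"
    by (simp add: tropical_polynomial_def hyperplane_poly_def)
  have diff: "term_eval ?s x - term_eval ?t x = int_vec c \<bullet> x - of_int d"
    by (simp add: term_eval_def inner_int_vec)
  show "x \<in> trop_hypersurface (hyperplane_poly c d) \<longleftrightarrow> x \<in> {x. int_vec c \<bullet> x = of_int d}"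
    unfolding mem_Collect_eq
  proof
    assume hyp: "x \<in> trop_hypersurface (hyperplane_poly c d)"
    show "int_vec c \<bullet> x = of_int d"
    proof (rule ccontr)
      assume "int_vec c \<bullet> x \<noteq> of_int d"
      then consider "term_eval ?s x < term_eval ?t x" | "term_eval ?t x < term_eval ?s x"
        using diff by linarith
      then have "x \<notin> trop_hypersurface (hyperplane_poly c d)"
      proof cases
        case 1
        then show ?thesis by (intro not_mem_trop_hypersurfaceI[of _ ?s]) (auto simp: hyperplane_poly_def)
      next
        case 2
        then show ?thesis by (intro not_mem_trop_hypersurfaceI[of _ ?t]) (auto simp: hyperplane_poly_def)
      qed
      then show False using hyp by simp
    qed
  next
    assume "int_vec c \<bullet> x = of_int d"
    then show "x \<in> trop_hypersurface (hyperplane_poly c d)"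
      using diff pos_part_vec_neq_neg_part_vec[OF assms]
      by (intro mem_trop_hypersurfaceI[OF T, of ?s ?t]) (auto simp: hyperplane_poly_def)
  qed
qed

lemma trop_hypersurface_halfspace_poly:
  assumes "c \<noteq> 0" and x: "int_vec c \<bullet> x = of_int d"
  shows "x \<in> trop_hypersurface (halfspace_poly c d a b) \<longleftrightarrow> int_vec a \<bullet> x \<le> of_int b"
proof -
  let ?L1 = "(pos_part_vec c + pos_part_vec a, 0 :: real)"
  let ?L2 = "(neg_part_vec c + pos_part_vec a, real_of_int d)"
  let ?L3 = "(pos_part_vec c + neg_part_vec a, real_of_int b)"
  have T: "tropical_polynomial (halfspace_poly c d a b)"
    by (simp add: tropical_polynomial_def halfspace_poly_def)
  have tie: "term_eval ?L1 x = term_eval ?L2 x"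
    using x by (simp add: term_eval_def exponent_vec_add inner_add_left inner_int_vec)
  have diff: "term_eval ?L1 x - term_eval ?L3 x = int_vec a \<bullet> x - of_int b"
    by (simp add: term_eval_def exponent_vec_add inner_add_left inner_int_vec)
  have ne: "fst ?L1 \<noteq> fst ?L2" using pos_part_vec_neq_neg_part_vec[OF assms(1)] by simp
  show ?thesis
  proof
    assume "x \<in> trop_hypersurface (halfspace_poly c d a b)"
    show "int_vec a \<bullet> x \<le> of_int b"
    proof (rule ccontr)
      assume "\<not> ?thesis"
      then have "x \<notin> trop_hypersurface (halfspace_poly c d a b)"
        using T tie diff
        by (intro not_mem_trop_hypersurfaceI[of _ ?L3]) (auto simp: tropical_polynomial_def halfspace_poly_def)
      then show False using \<open>x \<in> trop_hypersurface (halfspace_poly c d a b)\<close> by simp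
    qed
  next
    assume "int_vec a \<bullet> x \<le> of_int b"
    then show "x \<in> trop_hypersurface (halfspace_poly c d a b)"
      using T tie diff ne by (intro mem_trop_hypersurfaceI[of _ ?L1 ?L2]) (auto simp: halfspace_poly_def)
  qed
qed

lemma tropical_prevariety_rational_polyhedron:
  fixes P :: "(real ^ 'n) set"
  assumes "rational_polyhedron P" "aff_dim P < int CARD('n)"
  shows "tropical_prevariety P"
proof (cases "P = {}")
  case True
  then show ?thesis using tropical_prevariety_empty by simp
next
  case False
  obtain R where R: "finite R" "P = {x. \<forall>(a, b)\<in>R. int_vec a \<bullet> x \<le> of_int b}"
    using rational_polyhedron_inequalities[OF assms(1)] .
  let ?R = "(\<lambda>(a, b). (int_vec a, real_of_int b)) ` R"
  have "P = {x. \<forall>(a, b)\<in>?R. a \<bullet> x \<le> b}" using R(2) by auto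
  then obtain a b where "(a, b) \<in> ?R" "a \<noteq> 0" "\<forall>x\<in>P. a \<bullet> x = b"
    using implicit_equality_if_aff_dim_lt[of ?R P] R(1) False assms(2) by auto
  then obtain c d where cd: "(c, d) \<in> R" "c \<noteq> 0" "\<forall>x\<in>P. int_vec c \<bullet> x = of_int d"
    by auto
  let ?F = "insert (hyperplane_poly c d) ((\<lambda>(a, b). halfspace_poly c d a b) ` R)"
  have "(\<Inter>T\<in>?F. trop_hypersurface T) = P"
    using cd by (auto simp: R(2) trop_hypersurface_hyperplane_poly trop_hypersurface_halfspace_poly)
  moreover have "finite ?F" "\<forall>T\<in>?F. tropical_polynomial T"
    using R(1) by (auto simp: tropical_polynomial_def hyperplane_poly_def halfspace_poly_def)
  ultimately show ?thesis unfolding tropical_prevariety_def by blast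
qed

theorem corollary1p2:
  fixes \<P> :: "(real ^ 'n) set set"
  assumes "finite \<P>"
    and "\<And>P. P \<in> \<P> \<Longrightarrow> rational_polyhedron P"
    and "\<And>P. P \<in> \<P> \<Longrightarrow> aff_dim P < int CARD('n)"
  shows "tropical_prevariety (\<Union>\<P>)"
  using assms by (intro tropical_prevariety_Union tropical_prevariety_rational_polyhedron)

end
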